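(* Let $\mu$ be a Borel probability measure on $[0,1]$ and let $(v_k)_{k=1}^M\subseteq[0,1]$ with $M\in\mathbb{N}\cup\{\infty\}$. Then there exists $(x_k)_{k=1}^M\subseteq[0,1]$ such that for all integers $2\leq N\leq M$, $$D^*_N\Big(\mu;\tfrac1N\textstyle\sum_{i=1}^N\delta_{x_i}\Big)\leq D^*_N\Big(\lambda_1;\tfrac1N\textstyle\sum_{i=1}^N\delta_{v_i}\Big).$$ Moreover, if $\mu$ has no point masses (i.e. $\mu(\{x\})=0$ for every $x\in[0,1]$), then equality holds for all such $N$.
   Context: $\lambda_1$ is Lebesgue measure on $[0,1]$ and $\delta_y$ the Dirac measure at $y$. For probability measures $\mu,\nu$ on $[0,1]$, the star-discrepancy is $D^*_N(\mu;\nu)=\sup_{b\in[0,1]}|\mu([0,b))-\nu([0,b))|$ (supremum over half-open intervals anchored at $0$). *)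

theory Defs
  imports "HOL-Probability.Probability"
begin

definition emp_meas :: "(nat \<Rightarrow> real) \<Rightarrow> nat \<Rightarrow> real set \<Rightarrow> real" where
  "emp_meas x N A = real (card {i \<in> {1..N}. x i \<in> A}) / real N"

definition star_disc :: "(real set \<Rightarrow> real) \<Rightarrow> (nat \<Rightarrow> real) \<Rightarrow> nat \<Rightarrow> real" where
  "star_disc m x N = (SUP b\<in>{0..1}. \<bar>m {0..<b} - emp_meas x N {0..<b}\<bar>)"

end

theory Submission
  imports Defs
begin

text \<open>Take x_i = F^{-1}(v_i) for the generalized inverse of the left-continuous distribution
  function F(b) = \<mu>[0,b). Monotonicity and left-continuity of F give x < b \<longleftrightarrow> v < F(b), so the
  x_i counted in [0,b) are exactly the v_i counted in [0,F(b)), and \<lambda>[0,F(b)) = F(b) = \<mu>[0,b).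
  Hence every term of the \<mu>-discrepancy reappears in the Lebesgue discrepancy. If \<mu> has no
  atoms, F is continuous with F(0) = 0 and F(1) = 1, so it maps [0,1] onto [0,1] and both
  suprema range over the same terms.\<close>

lemma (in finite_borel_measure) measure_lessThan_at_left:
  "((\<lambda>t. measure M {..<t}) \<longlongrightarrow> measure M {..<a}) (at_left a)"
proof (rule tendsto_at_left_sequentially[of "a - 1"])
  fix f :: "nat \<Rightarrow> real"
  assume f: "\<And>n. f n < a" "incseq f" "f \<longlonglongrightarrow> a"
  then have "(\<lambda>n. measure M {..<f n}) \<longlonglongrightarrow> measure M (\<Union>n. {..<f n})"
    by (intro finite_Lim_measure_incseq) (auto simp: incseq_def)
  also have "(\<Union>n. {..<f n}) = {..<a}"
    by (auto dest!: order_tendstoD(1)[OF f(3)] eventually_happens'[OF sequentially_bot]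
        intro: less_trans f(1))
  finally show "(\<lambda>n. measure M {..<f n}) \<longlonglongrightarrow> measure M {..<a}" .
qed simp

definition quantile :: "(real \<Rightarrow> real) \<Rightarrow> real \<Rightarrow> real" where
  "quantile G w = (if \<exists>t\<in>{0..1}. w < G t then Inf {t\<in>{0..1}. w < G t} else 1)"

lemma quantile_in_unit_interval: "quantile G w \<in> {0..1}"
proof (cases "\<exists>t\<in>{0..1}. w < G t")
  case True
  then obtain t where t: "t \<in> {0..1}" "w < G t" by blast
  have "0 \<le> Inf {t\<in>{0..1}. w < G t}"
    using t by (intro cInf_greatest) auto
  moreover have "Inf {t\<in>{0..1}. w < G t} \<le> t"
    using t by (intro cInf_lower bdd_belowI[of _ 0]) auto
  ultimately show ?thesis
    using True t by (simp add: quantile_def)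
qed (simp add: quantile_def)

lemma quantile_less_iff:
  assumes mono: "mono G" and left_cont: "(G \<longlongrightarrow> G b) (at_left b)"
    and "G 0 \<le> w" and b: "b \<in> {0..1}"
  shows "quantile G w < b \<longleftrightarrow> w < G b"
proof
  assume "quantile G w < b"
  then have ne: "\<exists>t\<in>{0..1}. w < G t" and "Inf {t\<in>{0..1}. w < G t} < b"
    using b by (auto simp: quantile_def split: if_splits)
  then obtain t where "t \<in> {0..1}" "w < G t" "t < b"
    by (subst (asm) cInf_less_iff) (auto intro: bdd_belowI[of _ 0])
  then show "w < G b"
    using monoD[OF mono, of t b] by simp
next
  assume "w < G b"
  with \<open>G 0 \<le> w\<close> have "0 < b"
    using b monoD[OF mono, of b 0] by force
  have "eventually (\<lambda>t. t \<in> {0<..<b} \<and> w < G t) (at_left b)"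
    using eventually_at_left_real[OF \<open>0 < b\<close>] order_tendstoD(1)[OF left_cont \<open>w < G b\<close>]
    by eventually_elim simp
  then obtain t where t: "t \<in> {0<..<b}" "w < G t"
    using eventually_happens trivial_limit_at_left_real by blast
  then have "t \<in> {t\<in>{0..1}. w < G t}"
    using b by auto
  then have "quantile G w \<le> t"
    by (auto simp: quantile_def intro!: cInf_lower bdd_belowI[of _ 0])
  then show "quantile G w < b"
    using t by simp
qed

lemma emp_meas_in_unit_interval:
  assumes "0 < N"
  shows "emp_meas x N A \<in> {0..1}"
proof -
  have "card {i \<in> {1..N}. x i \<in> A} \<le> card {1..N}"
    by (intro card_mono) auto
  then show ?thesis
    using assms by (simp add: emp_meas_def)
qed

lemma emp_meas_quantile:
  assumes "mono G" "\<And>b. (G \<longlongrightarrow> G b) (at_left b)" "G 0 \<le> 0"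
    and v: "\<And>i. i \<in> {1..N} \<Longrightarrow> v i \<in> {0..1}" and b: "b \<in> {0..1}"
  shows "emp_meas (\<lambda>i. quantile G (v i)) N {0..<b} = emp_meas v N {0..<G b}"
proof -
  have "quantile G (v i) \<in> {0..<b} \<longleftrightarrow> v i \<in> {0..<G b}" if "i \<in> {1..N}" for i
    using quantile_less_iff[OF assms(1,2), of "v i" b] quantile_in_unit_interval[of G "v i"]
      assms(3) v[OF that] b by auto
  then show ?thesis
    unfolding emp_meas_def by (metis (lifting) mem_Collect_eq)
qed

lemma star_disc_le_by_reparametrization:
  assumes "0 < N" and m': "\<And>a. a \<in> {0..1} \<Longrightarrow> m' {0..<a} \<in> {0..1}"
    and reparam: "\<And>b. b \<in> {0..1} \<Longrightarrow> \<exists>a\<in>{0..1}.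
      \<bar>m {0..<b} - emp_meas x N {0..<b}\<bar> \<le> \<bar>m' {0..<a} - emp_meas y N {0..<a}\<bar>"
  shows "star_disc m x N \<le> star_disc m' y N"
  unfolding star_disc_def
proof (rule cSUP_least)
  fix b :: real
  assume "b \<in> {0..1}"
  then obtain a where a: "a \<in> {0..1}"
    and le: "\<bar>m {0..<b} - emp_meas x N {0..<b}\<bar> \<le> \<bar>m' {0..<a} - emp_meas y N {0..<a}\<bar>"
    using reparam by blast
  have "bdd_above ((\<lambda>a. \<bar>m' {0..<a} - emp_meas y N {0..<a}\<bar>) ` {0..1})"
  proof (rule bdd_aboveI2)
    fix a :: real
    assume "a \<in> {0..1}"
    then have "m' {0..<a} \<in> {0..1}" "emp_meas y N {0..<a} \<in> {0..1}"
      using m' emp_meas_in_unit_interval[OF \<open>0 < N\<close>] by auto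
    then show "\<bar>m' {0..<a} - emp_meas y N {0..<a}\<bar> \<le> 1"
      by auto
  qed
  with a have "\<bar>m' {0..<a} - emp_meas y N {0..<a}\<bar>
      \<le> (SUP a\<in>{0..1}. \<bar>m' {0..<a} - emp_meas y N {0..<a}\<bar>)"
    by (rule cSUP_upper)
  with le show "\<bar>m {0..<b} - emp_meas x N {0..<b}\<bar>
      \<le> (SUP a\<in>{0..1}. \<bar>m' {0..<a} - emp_meas y N {0..<a}\<bar>)"
    by linarith
qed simp

locale unit_interval_prob = prob_space \<mu> for \<mu> :: "real measure" +
  assumes sets_eq: "sets \<mu> = sets (restrict_space borel {0..1})"
begin

lemma space_eq: "space \<mu> = {0..1}"
  using sets_eq_imp_space_eq[OF sets_eq] by simp

text \<open>\<mu> extended by zero to all Borel sets of the real line, so that the library's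
  distribution functions apply.\<close>

definition borel_ext :: "real measure" where
  "borel_ext = distr \<mu> borel (\<lambda>x. x)"

lemma real_distribution_borel_ext: "real_distribution borel_ext"
  unfolding borel_ext_def
  by (intro real_distribution_distr) (simp add: measurable_cong_sets[OF sets_eq refl] measurable_restrict_space1)

lemma measure_borel_ext:
  assumes "A \<in> sets borel"
  shows "measure borel_ext A = measure \<mu> (A \<inter> {0..1})"
  using assms unfolding borel_ext_def
  by (subst measure_distr) (auto simp: measurable_cong_sets[OF sets_eq refl] measurable_restrict_space1 space_eq)

definition left_cdf :: "real \<Rightarrow> real" where
  "left_cdf t = measure borel_ext {..<t}"

lemma left_cdf_eq:
  assumes "b \<le> 1"
  shows "left_cdf b = measure \<mu> {0..<b}"
proof -
  have "{..<b} \<inter> {0..1} = {0..<b}"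
    using assms by auto
  then show ?thesis
    by (simp add: left_cdf_def measure_borel_ext)
qed

lemma left_cdf_in_unit_interval: "b \<in> {0..1} \<Longrightarrow> left_cdf b \<in> {0..1}"
  by (simp add: left_cdf_eq)

lemma mono_left_cdf: "mono left_cdf"
proof -
  interpret \<nu>: real_distribution borel_ext
    by (rule real_distribution_borel_ext)
  show ?thesis
    unfolding left_cdf_def by (auto intro!: monoI \<nu>.finite_measure_mono)
qed

lemma left_cdf_at_left: "(left_cdf \<longlongrightarrow> left_cdf b) (at_left b)"
proof -
  interpret \<nu>: real_distribution borel_ext
    by (rule real_distribution_borel_ext)
  show ?thesis
    unfolding left_cdf_def by (rule \<nu>.measure_lessThan_at_left)
qed

lemma left_cdf_0: "left_cdf 0 = 0"
  by (simp add: left_cdf_eq)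

lemma left_cdf_onto:
  assumes atomless: "\<forall>y\<in>{0..1}. measure \<mu> {y} = 0" and a: "a \<in> {0..1}"
  shows "\<exists>b\<in>{0..1}. left_cdf b = a"
proof -
  interpret \<nu>: real_distribution borel_ext
    by (rule real_distribution_borel_ext)
  have atom: "measure borel_ext {y} = 0" for y
    using atomless by (cases "y \<in> {0..1}") (auto simp: measure_borel_ext)
  then have cdf_eq: "cdf borel_ext t = left_cdf t" for t
    unfolding cdf_def2 left_cdf_def ivl_disj_un(2)[symmetric]
    by (subst \<nu>.finite_measure_Union) auto
  have "continuous_on {0..1} (cdf borel_ext)"
    using atom by (intro continuous_at_imp_continuous_on) (simp add: \<nu>.isCont_cdf)
  moreover have "cdf borel_ext 0 = 0"
    by (simp add: cdf_eq left_cdf_0)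
  moreover have "cdf borel_ext 1 = prob (space \<mu>)"
    by (simp add: cdf_def2 measure_borel_ext space_eq Int_absorb1)
  ultimately show ?thesis
    using IVT'[of "cdf borel_ext" 0 a 1] a prob_space by (auto simp: cdf_eq)
qed

lemma discrepancy_term_quantile:
  assumes v: "\<And>i. i \<in> {1..N} \<Longrightarrow> v i \<in> {0..1}" and b: "b \<in> {0..1}"
  shows "\<bar>measure \<mu> {0..<b} - emp_meas (\<lambda>i. quantile left_cdf (v i)) N {0..<b}\<bar>
    = \<bar>measure lborel {0..<left_cdf b} - emp_meas v N {0..<left_cdf b}\<bar>"
  using emp_meas_quantile[OF mono_left_cdf left_cdf_at_left _ v b] b
    left_cdf_eq[of b] left_cdf_in_unit_interval[OF b] by (simp add: left_cdf_0)

lemma star_disc_quantile_le: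
  assumes "0 < N" and v: "\<And>i. i \<in> {1..N} \<Longrightarrow> v i \<in> {0..1}"
  shows "star_disc (measure \<mu>) (\<lambda>i. quantile left_cdf (v i)) N \<le> star_disc (measure lborel) v N"
  using assms discrepancy_term_quantile[OF v] left_cdf_in_unit_interval
  by (intro star_disc_le_by_reparametrization) force+

lemma star_disc_quantile_eq:
  assumes atomless: "\<forall>y\<in>{0..1}. measure \<mu> {y} = 0"
    and "0 < N" and v: "\<And>i. i \<in> {1..N} \<Longrightarrow> v i \<in> {0..1}"
  shows "star_disc (measure \<mu>) (\<lambda>i. quantile left_cdf (v i)) N = star_disc (measure lborel) v N"
proof (rule antisym[OF star_disc_quantile_le[OF \<open>0 < N\<close> v]])
  show "star_disc (measure lborel) v N \<le> star_disc (measure \<mu>) (\<lambda>i. quantile left_cdf (v i)) N"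
  proof (rule star_disc_le_by_reparametrization)
    fix a :: real
    assume "a \<in> {0..1}"
    then obtain b where b: "b \<in> {0..1}" "left_cdf b = a"
      using left_cdf_onto[OF atomless] by blast
    then show "\<exists>b\<in>{0..1}. \<bar>measure lborel {0..<a} - emp_meas v N {0..<a}\<bar>
        \<le> \<bar>measure \<mu> {0..<b} - emp_meas (\<lambda>i. quantile left_cdf (v i)) N {0..<b}\<bar>"
      using discrepancy_term_quantile[OF v b(1)] by (intro bexI[OF _ b(1)]) simp
  qed (use \<open>0 < N\<close> left_cdf_eq left_cdf_in_unit_interval in force)+
qed

end

theorem lemma3p3:
  fixes \<mu> :: "real measure" and v :: "nat \<Rightarrow> real" and M :: enat
  assumes "prob_space \<mu>"
    and "sets \<mu> = sets (restrict_space borel {0..1})"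
    and "\<And>k. 1 \<le> k \<Longrightarrow> enat k \<le> M \<Longrightarrow> v k \<in> {0..1}"
  shows "\<exists>x :: nat \<Rightarrow> real.
           (\<forall>k. 1 \<le> k \<and> enat k \<le> M \<longrightarrow> x k \<in> {0..1}) \<and>
           (\<forall>N. 2 \<le> N \<and> enat N \<le> M \<longrightarrow>
               star_disc (measure \<mu>) x N \<le> star_disc (measure lborel) v N) \<and>
           ((\<forall>y\<in>{0..1}. measure \<mu> {y} = 0) \<longrightarrow>
              (\<forall>N. 2 \<le> N \<and> enat N \<le> M \<longrightarrow>
               star_disc (measure \<mu>) x N = star_disc (measure lborel) v N))"
proof -
  interpret unit_interval_prob \<mu>
    using assms(1,2) by (simp add: unit_interval_prob_def unit_interval_prob_axioms_def)
  have v: "v i \<in> {0..1}" if "enat N \<le> M" "i \<in> {1..N}" for N i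
    using assms(3) that by (meson atLeastAtMost_iff enat_ord_simps(1) order_trans)
  show ?thesis
  proof (intro exI[of _ "\<lambda>i. quantile left_cdf (v i)"] conjI allI impI)
    fix N :: nat
    assume "2 \<le> N \<and> enat N \<le> M"
    then show "star_disc (measure \<mu>) (\<lambda>i. quantile left_cdf (v i)) N \<le> star_disc (measure lborel) v N"
      and "(\<forall>y\<in>{0..1}. measure \<mu> {y} = 0) \<Longrightarrow>
        star_disc (measure \<mu>) (\<lambda>i. quantile left_cdf (v i)) N = star_disc (measure lborel) v N"
      using v star_disc_quantile_le star_disc_quantile_eq by auto
  qed (rule quantile_in_unit_interval)
qed

end
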